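(* Let $(X,x)$ be a pointed diffeological space and let $A$ be a $D$-open neighbourhood of $x$ in $X$, equipped with the sub-diffeology of $X$. Then the inclusion map $A\hookrightarrow X$ induces an isomorphism $T_x(A)\cong T_x(X)$.
   Context: A diffeological space is a set $X$ together with, for every open subset $U$ of every $\mathbb{R}^n$, a set of functions $U\to X$ called plots, such that constant maps are plots, the composite of a plot with a smooth map between open subsets of Euclidean spaces is a plot, and a function which is locally a plot is a plot; smooth maps send plots to plots. The $D$-topology on $X$ is the final topology with respect to all plots; a subset is $D$-open if its preimage under every plot is open. The sub-diffeology on $A\subseteq X$ consists of all maps $U\to A$ whose composite with the inclusion is a plot of $X$. The internal tangent space $T_x(X)$ is the colimit in the category of real vector spaces of the functor on the category whose objects are plots $p:U\to X$ with $U$ a connected open neighbourhood of $0$ in some $\mathbb{R}^n$ and $p(0)=x$, and whose morphisms $p\to q$ (for $q:V\to X$) are smooth maps $f:U\to V$ with $f(0)=0$ and $q\circ f=p$, sending $p$ to $T_0(U)$ and $f$ to $f_*:T_0(U)\to T_0(V)$. Smooth pointed maps induce linear maps between internal tangent spaces. *)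

theory Defs
  imports "HOL-Analysis.Analysis"
begin

text \<open>Since the dimension n varies inside the definition of a diffeology, R^n is encoded as
  the subset of nat => real of vectors vanishing at all indices >= n, with the (product =
  Euclidean) topology.\<close>

definition Eucl :: "nat \<Rightarrow> (nat \<Rightarrow> real) set" where
  "Eucl n = {v. \<forall>i\<ge>n. v i = 0}"

definition origin :: "nat \<Rightarrow> real" where
  "origin = (\<lambda>_. 0)"

definition eopen :: "nat \<Rightarrow> (nat \<Rightarrow> real) set \<Rightarrow> bool" where
  "eopen n U \<longleftrightarrow> U \<subseteq> Eucl n \<and> openin (top_of_set (Eucl n)) U"

definition pderiv_at :: "((nat \<Rightarrow> real) \<Rightarrow> real) \<Rightarrow> nat \<Rightarrow> (nat \<Rightarrow> real) \<Rightarrow> real" where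
  "pderiv_at g i u = deriv (\<lambda>t. g (u(i := u i + t))) 0"

fun Ck :: "nat \<Rightarrow> (nat \<Rightarrow> real) set \<Rightarrow> nat \<Rightarrow> ((nat \<Rightarrow> real) \<Rightarrow> real) \<Rightarrow> bool" where
  "Ck m V 0 g = continuous_on V g"
| "Ck m V (Suc k) g = (continuous_on V g \<and>
     (\<forall>i<m. \<exists>h. (\<forall>v\<in>V. ((\<lambda>t. g (v(i := v i + t))) has_real_derivative h v) (at 0))
                 \<and> Ck m V k h))"

definition smooth_fn :: "nat \<Rightarrow> (nat \<Rightarrow> real) set \<Rightarrow> ((nat \<Rightarrow> real) \<Rightarrow> real) \<Rightarrow> bool" where
  "smooth_fn m V g \<longleftrightarrow> (\<forall>k. Ck m V k g)"

definition smooth_map ::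
  "nat \<Rightarrow> (nat \<Rightarrow> real) set \<Rightarrow> nat \<Rightarrow> (nat \<Rightarrow> real) set \<Rightarrow> ((nat \<Rightarrow> real) \<Rightarrow> (nat \<Rightarrow> real)) \<Rightarrow> bool" where
  "smooth_map m V n U f \<longleftrightarrow> eopen m V \<and> eopen n U \<and> f ` V \<subseteq> U \<and>
     (\<forall>j<n. smooth_fn m V (\<lambda>v. f v j))"

text \<open>A diffeology on the set X is given by the predicate P: P n U p means that U is an open
  subset of R^n and p restricted to U is a plot U -> X (values of p outside U are irrelevant).\<close>

type_synonym 'a plots = "nat \<Rightarrow> (nat \<Rightarrow> real) set \<Rightarrow> ((nat \<Rightarrow> real) \<Rightarrow> 'a) \<Rightarrow> bool"

definition diffeology :: "'a set \<Rightarrow> 'a plots \<Rightarrow> bool" where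
  "diffeology X P \<longleftrightarrow>
     (\<forall>n U p. P n U p \<longrightarrow> eopen n U \<and> p ` U \<subseteq> X) \<and>
     (\<forall>n U p q. P n U p \<longrightarrow> (\<forall>u\<in>U. p u = q u) \<longrightarrow> P n U q) \<and>
     (\<forall>n U x. eopen n U \<longrightarrow> x \<in> X \<longrightarrow> P n U (\<lambda>_. x)) \<and>
     (\<forall>n U p m V f. P n U p \<longrightarrow> smooth_map m V n U f \<longrightarrow> P m V (p \<circ> f)) \<and>
     (\<forall>n U p. eopen n U \<longrightarrow> p ` U \<subseteq> X \<longrightarrow>
        (\<forall>u\<in>U. \<exists>W. u \<in> W \<and> W \<subseteq> U \<and> eopen n W \<and> P n W p) \<longrightarrow> P n U p)"

definition D_open :: "'a set \<Rightarrow> 'a plots \<Rightarrow> 'a set \<Rightarrow> bool" where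
  "D_open X P A \<longleftrightarrow> A \<subseteq> X \<and>
     (\<forall>n U p. P n U p \<longrightarrow> openin (top_of_set U) {u\<in>U. p u \<in> A})"

definition subplots :: "'a plots \<Rightarrow> 'a set \<Rightarrow> 'a plots" where
  "subplots P A = (\<lambda>n U p. P n U p \<and> p ` U \<subseteq> A)"

type_synonym 'a tobj = "nat \<times> (nat \<Rightarrow> real) set \<times> ((nat \<Rightarrow> real) \<Rightarrow> 'a)"

text \<open>objects of the indexing category: plots p : U -> X, U connected open nbhd of 0, p 0 = x\<close>
definition tobj :: "'a plots \<Rightarrow> 'a \<Rightarrow> 'a tobj \<Rightarrow> bool" where
  "tobj P x ob \<longleftrightarrow> (case ob of (n, U, p) \<Rightarrow> P n U p \<and> connected U \<and> origin \<in> U \<and> p origin = x)"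

definition tmor :: "'a tobj \<Rightarrow> 'a tobj \<Rightarrow> ((nat \<Rightarrow> real) \<Rightarrow> (nat \<Rightarrow> real)) \<Rightarrow> bool" where
  "tmor o1 o2 f \<longleftrightarrow> (case o1 of (n, U, p) \<Rightarrow> case o2 of (m, V, q) \<Rightarrow>
      smooth_map n U m V f \<and> f origin = origin \<and> (\<forall>u\<in>U. q (f u) = p u))"

text \<open>f_* : T_0(U) -> T_0(V), the derivative (Jacobian) of f at 0, where T_0(R^n) = R^n\<close>
definition push_vec :: "nat \<Rightarrow> ((nat \<Rightarrow> real) \<Rightarrow> (nat \<Rightarrow> real)) \<Rightarrow> (nat \<Rightarrow> real) \<Rightarrow> (nat \<Rightarrow> real)" where
  "push_vec n f v = (\<lambda>j. \<Sum>i<n. v i * pderiv_at (\<lambda>u. f u j) i origin)"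

definition vzero :: "'o \<Rightarrow> nat \<Rightarrow> real" where "vzero = (\<lambda>ob j. 0)"
definition vadd :: "('o \<Rightarrow> nat \<Rightarrow> real) \<Rightarrow> ('o \<Rightarrow> nat \<Rightarrow> real) \<Rightarrow> ('o \<Rightarrow> nat \<Rightarrow> real)" where
  "vadd s t = (\<lambda>ob j. s ob j + t ob j)"
definition vdiff :: "('o \<Rightarrow> nat \<Rightarrow> real) \<Rightarrow> ('o \<Rightarrow> nat \<Rightarrow> real) \<Rightarrow> ('o \<Rightarrow> nat \<Rightarrow> real)" where
  "vdiff s t = (\<lambda>ob j. s ob j - t ob j)"
definition vscale :: "real \<Rightarrow> ('o \<Rightarrow> nat \<Rightarrow> real) \<Rightarrow> ('o \<Rightarrow> nat \<Rightarrow> real)" where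
  "vscale c s = (\<lambda>ob j. c * s ob j)"
definition vsingle :: "'o \<Rightarrow> (nat \<Rightarrow> real) \<Rightarrow> ('o \<Rightarrow> nat \<Rightarrow> real)" where
  "vsingle o0 w = (\<lambda>ob. if ob = o0 then w else origin)"

inductive_set lspan :: "('o \<Rightarrow> nat \<Rightarrow> real) set \<Rightarrow> ('o \<Rightarrow> nat \<Rightarrow> real) set" for G where
  zero: "vzero \<in> lspan G"
| step: "g \<in> G \<Longrightarrow> s \<in> lspan G \<Longrightarrow> vadd (vscale c g) s \<in> lspan G"

text \<open>the direct sum of the T_0(U) = R^n over all objects (n,U,p)\<close>
definition dsum :: "'a plots \<Rightarrow> 'a \<Rightarrow> ('a tobj \<Rightarrow> nat \<Rightarrow> real) set" where
  "dsum P x = {s. finite {ob. s ob \<noteq> origin} \<and>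
                  (\<forall>ob. s ob \<noteq> origin \<longrightarrow> tobj P x ob \<and> s ob \<in> Eucl (fst ob))}"

text \<open>colimit relations: iota_p(v) - iota_q(f_* v) for every morphism f : p -> q\<close>
definition trel :: "'a plots \<Rightarrow> 'a \<Rightarrow> ('a tobj \<Rightarrow> nat \<Rightarrow> real) set" where
  "trel P x = {vdiff (vsingle o1 v) (vsingle o2 (push_vec (fst o1) f v)) | o1 o2 f v.
                 tobj P x o1 \<and> tobj P x o2 \<and> tmor o1 o2 f \<and> v \<in> Eucl (fst o1)}"

definition tclass :: "'a plots \<Rightarrow> 'a \<Rightarrow> ('a tobj \<Rightarrow> nat \<Rightarrow> real) \<Rightarrow> ('a tobj \<Rightarrow> nat \<Rightarrow> real) set" where
  "tclass P x s = {t \<in> dsum P x. vdiff t s \<in> lspan (trel P x)}"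

text \<open>T_x(X) = colim = dsum / span(trel), as the set of cosets\<close>
definition tspace :: "'a plots \<Rightarrow> 'a \<Rightarrow> ('a tobj \<Rightarrow> nat \<Rightarrow> real) set set" where
  "tspace P x = tclass P x ` dsum P x"

definition obj_map :: "('a \<Rightarrow> 'b) \<Rightarrow> 'a tobj \<Rightarrow> 'b tobj" where
  "obj_map \<phi> ob = (case ob of (n, U, p) \<Rightarrow> (n, U, \<phi> \<circ> p))"

definition push_sum :: "('a \<Rightarrow> 'b) \<Rightarrow> ('a tobj \<Rightarrow> nat \<Rightarrow> real) \<Rightarrow> ('b tobj \<Rightarrow> nat \<Rightarrow> real)" where
  "push_sum \<phi> s = (\<lambda>ob' j. \<Sum>ob\<in>{ob. s ob \<noteq> origin \<and> obj_map \<phi> ob = ob'}. s ob j)"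

definition tmap :: "'b plots \<Rightarrow> 'a \<Rightarrow> ('a \<Rightarrow> 'b) \<Rightarrow> ('a tobj \<Rightarrow> nat \<Rightarrow> real) set \<Rightarrow> ('b tobj \<Rightarrow> nat \<Rightarrow> real) set" where
  "tmap Q x \<phi> C = {t \<in> dsum Q (\<phi> x). \<exists>s\<in>C. vdiff t (push_sum \<phi> s) \<in> lspan (trel Q (\<phi> x))}"

end

theory Submission
  imports Defs
begin

text \<open>Restricting a plot p centred at x to the connected component of the origin in
  p\<inverse>(A) yields a plot of A, and the inclusion of that component is a morphism with
  identity derivative. Morphisms restrict to morphisms, since they fix the origin and map
  connected sets to connected sets. So the indexing category for A is a full subcategory of
  the one for X onto which every object retracts, functorially and along identity maps; the
  retraction, extended linearly to the direct sums, inverts the induced map of colimits.\<close>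

lemma Ck_subset: "Ck m V k g \<Longrightarrow> V' \<subseteq> V \<Longrightarrow> Ck m V' k g"
proof (induction k arbitrary: g)
  case 0
  then show ?case by (auto intro: continuous_on_subset)
next
  case (Suc k)
  then show ?case
    using continuous_on_subset[of V g V'] by (simp; blast)
qed

lemma Ck_const: "Ck m V k (\<lambda>_. c)"
  by (induction k arbitrary: c) (auto intro!: exI[of _ "\<lambda>_. 0"])

lemma has_real_derivative_coord_shift:
  "((\<lambda>t. (v(i := v i + t)) j) has_real_derivative (if i = j then 1 else 0)) (at 0)"
  by (cases "i = j") (auto intro!: derivative_eq_intros)

lemma continuous_on_coord: "continuous_on V (\<lambda>v::nat \<Rightarrow> real. v j)"
  by (rule continuous_on_subset[OF continuous_on_product_coordinates]) simp

lemma Ck_coord: "Ck m V k (\<lambda>v. v j)"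
proof (cases k)
  case 0
  then show ?thesis by (simp add: continuous_on_coord)
next
  case (Suc k')
  have "\<forall>i<m. \<exists>h. (\<forall>v\<in>V. ((\<lambda>t. (v(i := v i + t)) j) has_real_derivative h v) (at 0)) \<and> Ck m V k' h"
  proof (intro allI impI)
    fix i
    show "\<exists>h. (\<forall>v\<in>V. ((\<lambda>t. (v(i := v i + t)) j) has_real_derivative h v) (at 0)) \<and> Ck m V k' h"
      by (intro exI[of _ "\<lambda>_. if i = j then 1 else 0"] conjI ballI has_real_derivative_coord_shift Ck_const)
  qed
  with Suc show ?thesis by (simp add: continuous_on_coord)
qed

lemma smooth_map_subset:
  assumes "smooth_map n U m V f" "eopen n U'" "U' \<subseteq> U" "eopen m V'" "f ` U' \<subseteq> V'"
  shows "smooth_map n U' m V' f"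
  using assms unfolding smooth_map_def smooth_fn_def by (blast intro: Ck_subset)

lemma smooth_map_inclusion:
  assumes "eopen n W" "eopen n U" "W \<subseteq> U"
  shows "smooth_map n W n U id"
  using assms unfolding smooth_map_def smooth_fn_def by (simp add: Ck_coord)

lemma continuous_on_smooth_map:
  assumes "smooth_map n U m V f"
  shows "continuous_on U f"
proof (rule continuous_on_coordinatewise_then_product)
  fix j
  show "continuous_on U (\<lambda>u. f u j)"
  proof (cases "j < m")
    case True
    then show ?thesis
      using assms unfolding smooth_map_def smooth_fn_def by (metis Ck.simps(1))
  next
    case False
    have "f ` U \<subseteq> Eucl m"
      using assms unfolding smooth_map_def eopen_def by blast
    then have "\<forall>u\<in>U. f u j = 0"
      using False by (auto simp: Eucl_def)
    then show ?thesis
      using continuous_on_cong[of U U "\<lambda>u. f u j" "\<lambda>_. 0"] by simp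
  qed
qed

lemma pderiv_at_coord: "pderiv_at (\<lambda>u. u j) i origin = (if i = j then 1 else 0)"
  unfolding pderiv_at_def by (rule DERIV_imp_deriv[OF has_real_derivative_coord_shift])

lemma push_vec_id: "v \<in> Eucl n \<Longrightarrow> push_vec n id v = v"
  unfolding push_vec_def
  by (auto simp: fun_eq_iff pderiv_at_coord Eucl_def if_distrib[of "(*) _"] sum.delta cong: if_cong)

lemma lspan_add: "s \<in> lspan G \<Longrightarrow> t \<in> lspan G \<Longrightarrow> vadd s t \<in> lspan G"
proof (induction s rule: lspan.induct)
  case zero
  then show ?case by (simp add: vadd_def vzero_def)
next
  case (step g s c)
  have "vadd (vadd (vscale c g) s) t = vadd (vscale c g) (vadd s t)"
    by (simp add: vadd_def add.assoc)
  then show ?case using step by (simp add: lspan.step)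
qed

lemma lspan_scale: "s \<in> lspan G \<Longrightarrow> vscale a s \<in> lspan G"
proof (induction s rule: lspan.induct)
  case zero
  then show ?case using lspan.zero by (simp add: vscale_def vzero_def)
next
  case (step g s c)
  have "vscale a (vadd (vscale c g) s) = vadd (vscale (a * c) g) (vscale a s)"
    by (simp add: vadd_def vscale_def algebra_simps)
  then show ?case using step by (simp add: lspan.step)
qed

lemma lspan_base: "g \<in> G \<Longrightarrow> g \<in> lspan G"
  using lspan.step[OF _ lspan.zero, of g G 1] by (simp add: vadd_def vscale_def vzero_def)

lemma vdiff_eq_vadd_vscale: "vdiff s t = vadd s (vscale (-1) t)"
  by (simp add: vadd_def vscale_def vdiff_def)

lemma lspan_diff: "s \<in> lspan G \<Longrightarrow> t \<in> lspan G \<Longrightarrow> vdiff s t \<in> lspan G"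
  by (simp add: vdiff_eq_vadd_vscale lspan_add lspan_scale)

lemma lspan_mono: "s \<in> lspan G \<Longrightarrow> G \<subseteq> H \<Longrightarrow> s \<in> lspan H"
  by (induction s rule: lspan.induct) (auto intro: lspan.intros)

definition supp :: "('o \<Rightarrow> nat \<Rightarrow> real) \<Rightarrow> 'o set" where
  "supp s = {ob. s ob \<noteq> origin}"

lemma supp_vzero [simp]: "supp vzero = {}"
  by (simp add: supp_def vzero_def origin_def)

lemma supp_vadd: "supp (vadd s t) \<subseteq> supp s \<union> supp t"
  by (auto simp: supp_def vadd_def origin_def fun_eq_iff)

lemma supp_vdiff: "supp (vdiff s t) \<subseteq> supp s \<union> supp t"
  by (auto simp: supp_def vdiff_def origin_def)

lemma supp_vscale: "supp (vscale c s) \<subseteq> supp s"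
  by (auto simp: supp_def vscale_def origin_def)

lemma supp_vsingle: "supp (vsingle ob w) \<subseteq> {ob}"
  by (auto simp: supp_def vsingle_def)

lemma finite_supp_vsingle [simp]: "finite (supp (vsingle ob w))"
  by (rule finite_subset[OF supp_vsingle]) simp

lemma finite_supp_vadd: "finite (supp s) \<Longrightarrow> finite (supp t) \<Longrightarrow> finite (supp (vadd s t))"
  by (rule finite_subset[OF supp_vadd]) simp

lemma finite_supp_vdiff: "finite (supp s) \<Longrightarrow> finite (supp t) \<Longrightarrow> finite (supp (vdiff s t))"
  by (rule finite_subset[OF supp_vdiff]) simp

lemma finite_supp_vscale: "finite (supp s) \<Longrightarrow> finite (supp (vscale c s))"
  by (rule finite_subset[OF supp_vscale])

lemma finite_supp_trel: "g \<in> trel P x \<Longrightarrow> finite (supp g)"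
  by (auto simp: trel_def intro!: finite_supp_vdiff)

lemma finite_supp_lspan_trel: "s \<in> lspan (trel P x) \<Longrightarrow> finite (supp s)"
  by (induction s rule: lspan.induct)
     (auto intro: finite_supp_vadd finite_supp_vscale finite_supp_trel)

lemma dsum_iff:
  "s \<in> dsum P x \<longleftrightarrow> finite (supp s) \<and> (\<forall>ob\<in>supp s. tobj P x ob \<and> s ob \<in> Eucl (fst ob))"
  by (simp add: dsum_def supp_def)

lemma dsum_memD: "s \<in> dsum P x \<Longrightarrow> ob \<in> supp s \<Longrightarrow> tobj P x ob \<and> s ob \<in> Eucl (fst ob)"
  unfolding dsum_iff by blast

lemma dsum_Eucl: "s \<in> dsum P x \<Longrightarrow> s ob \<in> Eucl (fst ob)"
  using dsum_memD[of s P x ob] by (cases "ob \<in> supp s") (auto simp: supp_def Eucl_def origin_def)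

lemma vzero_in_dsum: "vzero \<in> dsum P x"
  by (simp add: dsum_iff)

lemma dsum_vadd_vsingle:
  assumes s: "s \<in> dsum P x" and ob: "tobj P x ob" "w \<in> Eucl (fst ob)"
  shows "vadd s (vsingle ob w) \<in> dsum P x"
proof -
  have "tobj P x ob' \<and> vadd s (vsingle ob w) ob' \<in> Eucl (fst ob')"
    if ob': "ob' \<in> supp (vadd s (vsingle ob w))" for ob'
  proof (cases "ob' = ob")
    case True
    then show ?thesis
      using ob dsum_Eucl[OF s, of ob] by (simp add: vadd_def vsingle_def Eucl_def)
  next
    case False
    then have "vadd s (vsingle ob w) ob' = s ob'"
      by (simp add: vadd_def vsingle_def origin_def)
    then show ?thesis
      using ob' dsum_memD[OF s, of ob'] by (simp add: supp_def)
  qed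
  moreover have "finite (supp (vadd s (vsingle ob w)))"
    using s by (simp add: dsum_iff finite_supp_vadd)
  ultimately show ?thesis by (simp add: dsum_iff)
qed

lemma dsum_induct [consumes 1, case_names zero add]:
  assumes "s \<in> dsum P x"
    and zero: "R vzero"
    and add: "\<And>s ob w. R s \<Longrightarrow> s \<in> dsum P x \<Longrightarrow> tobj P x ob \<Longrightarrow> w \<in> Eucl (fst ob) \<Longrightarrow>
           R (vadd s (vsingle ob w))"
  shows "R s"
proof -
  have "R s" if "finite F" "supp s = F" "s \<in> dsum P x" for F s
    using that
  proof (induction F arbitrary: s rule: finite_induct)
    case empty
    then have "s = vzero" by (auto simp: supp_def vzero_def origin_def fun_eq_iff)
    then show ?case using zero by simp
  next
    case (insert ob F)
    define s0 where "s0 = s(ob := origin)"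
    have "supp s0 = F"
      using insert.hyps(2) insert.prems(1) by (auto simp: supp_def s0_def)
    moreover have "s0 \<in> dsum P x"
      using insert.hyps(1) insert.prems(2) \<open>supp s0 = F\<close>
      by (auto simp: dsum_iff supp_def s0_def)
    ultimately have "R s0" by (rule insert.IH)
    have "tobj P x ob" "s ob \<in> Eucl (fst ob)"
      using insert.prems by (auto simp: dsum_iff)
    moreover have "s = vadd s0 (vsingle ob (s ob))"
      by (simp add: fun_eq_iff s0_def vadd_def vsingle_def origin_def)
    ultimately show ?case using add[OF \<open>R s0\<close> \<open>s0 \<in> dsum P x\<close>] by metis
  qed
  moreover have "finite (supp s)" using assms(1) by (simp add: dsum_iff)
  ultimately show ?thesis using assms(1) by blast
qed

definition reindex :: "('o \<Rightarrow> 'p) \<Rightarrow> ('o \<Rightarrow> nat \<Rightarrow> real) \<Rightarrow> ('p \<Rightarrow> nat \<Rightarrow> real)" where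
  "reindex r s = (\<lambda>ob' j. \<Sum>ob\<in>{ob. s ob \<noteq> origin \<and> r ob = ob'}. s ob j)"

lemma push_sum_eq_reindex: "push_sum \<phi> = reindex (obj_map \<phi>)"
  by (simp add: fun_eq_iff push_sum_def reindex_def)

lemma reindex_over_superset:
  assumes "finite F" "supp s \<subseteq> F"
  shows "reindex r s ob' j = (\<Sum>ob\<in>{ob\<in>F. r ob = ob'}. s ob j)"
  unfolding reindex_def
  by (rule sum.mono_neutral_left) (use assms in \<open>auto simp: supp_def origin_def\<close>)

lemma reindex_vadd:
  assumes "finite (supp s)" "finite (supp t)"
  shows "reindex r (vadd s t) = vadd (reindex r s) (reindex r t)"
proof (intro ext)
  fix ob' j
  let ?F = "supp s \<union> supp t"
  have "finite ?F" using assms by simp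
  then show "reindex r (vadd s t) ob' j = vadd (reindex r s) (reindex r t) ob' j"
    using supp_vadd[of s t]
    by (simp add: reindex_over_superset[of ?F] vadd_def sum.distrib)
qed

lemma reindex_vscale:
  assumes "finite (supp s)"
  shows "reindex r (vscale c s) = vscale c (reindex r s)"
proof (intro ext)
  fix ob' j
  show "reindex r (vscale c s) ob' j = vscale c (reindex r s) ob' j"
    using assms supp_vscale[of c s]
    by (simp add: reindex_over_superset[of "supp s"] vscale_def sum_distrib_left)
qed

lemma reindex_vdiff:
  assumes "finite (supp s)" "finite (supp t)"
  shows "reindex r (vdiff s t) = vdiff (reindex r s) (reindex r t)"
  using assms by (simp add: vdiff_eq_vadd_vscale reindex_vadd reindex_vscale finite_supp_vscale)

lemma reindex_vzero [simp]: "reindex r vzero = vzero"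
  by (simp add: reindex_def vzero_def origin_def)

lemma reindex_vsingle [simp]: "reindex r (vsingle ob w) = vsingle (r ob) w"
proof (intro ext)
  fix ob' j
  have "{q\<in>{ob}. r q = ob'} = (if r ob = ob' then {ob} else {})" by auto
  then show "reindex r (vsingle ob w) ob' j = vsingle (r ob) w ob' j"
    using supp_vsingle[of ob w]
    by (auto simp: reindex_over_superset[of "{ob}"] vsingle_def origin_def)
qed

lemma reindex_id: "reindex id s = s"
proof (intro ext)
  fix ob' j
  have "{ob. s ob \<noteq> origin \<and> ob = ob'} = (if s ob' \<noteq> origin then {ob'} else {})" by auto
  then show "reindex id s ob' j = s ob' j"
    by (auto simp: reindex_def origin_def)
qed

lemma obj_map_id: "obj_map (\<lambda>a. a) = id"
  by (auto simp: fun_eq_iff obj_map_def comp_def split: prod.split)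

lemma push_sum_id: "push_sum (\<lambda>a. a) s = s"
  by (simp add: push_sum_eq_reindex obj_map_id reindex_id)

lemma tclass_eq:
  assumes "vdiff s t \<in> lspan (trel P x)"
  shows "tclass P x s = tclass P x t"
proof -
  have "vdiff u t \<in> lspan (trel P x) \<longleftrightarrow> vdiff u s \<in> lspan (trel P x)" for u
  proof
    assume "vdiff u t \<in> lspan (trel P x)"
    then have "vdiff (vdiff u t) (vdiff s t) \<in> lspan (trel P x)" using assms by (rule lspan_diff)
    then show "vdiff u s \<in> lspan (trel P x)" by (simp add: vdiff_def)
  next
    assume "vdiff u s \<in> lspan (trel P x)"
    then have "vadd (vdiff u s) (vdiff s t) \<in> lspan (trel P x)" using assms by (rule lspan_add)
    then show "vdiff u t \<in> lspan (trel P x)" by (simp add: vadd_def vdiff_def)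
  qed
  then show ?thesis by (simp add: tclass_def)
qed

lemma vdiff_self [simp]: "vdiff s s = vzero"
  by (simp add: vdiff_def vzero_def)

lemma tclass_self: "s \<in> dsum P x \<Longrightarrow> s \<in> tclass P x s"
  by (simp add: tclass_def lspan.zero)

text \<open>Each summand at ob is congruent to its copy at r ob, the morphism r ob \<rightarrow> ob being
  the identity map, whose derivative is the identity.\<close>

lemma vdiff_reindex_in_lspan_trel:
  assumes retract: "\<And>ob. tobj P x ob \<Longrightarrow> tobj P x (r ob) \<and> tmor (r ob) ob id \<and> fst (r ob) = fst ob"
    and "s \<in> dsum P x"
  shows "vdiff s (reindex r s) \<in> lspan (trel P x)"
  using assms(2)
proof (induction rule: dsum_induct)
  case zero
  then show ?case by (simp add: lspan.zero)
next
  case (add s ob w)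
  have ob: "tobj P x (r ob)" "tmor (r ob) ob id" "w \<in> Eucl (fst (r ob))"
    using retract[OF add(3)] add(4) by auto
  then have "vdiff (vsingle (r ob) w) (vsingle ob (push_vec (fst (r ob)) id w)) \<in> trel P x"
    unfolding trel_def using add(3) by blast
  then have "vdiff (vsingle (r ob) w) (vsingle ob w) \<in> lspan (trel P x)"
    using push_vec_id[OF ob(3)] by (simp add: lspan_base)
  from lspan_diff[OF add.IH this]
  have "vdiff (vdiff s (reindex r s)) (vdiff (vsingle (r ob) w) (vsingle ob w)) \<in> lspan (trel P x)" .
  moreover have "reindex r (vadd s (vsingle ob w)) = vadd (reindex r s) (vsingle (r ob) w)"
    using add(2) by (simp add: reindex_vadd dsum_iff)
  ultimately show ?case by (simp add: vdiff_def vadd_def algebra_simps)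
qed

lemma reindex_in_dsum:
  assumes "\<And>ob. tobj P x ob \<Longrightarrow> tobj Q x (r ob) \<and> fst (r ob) = fst ob"
    and "s \<in> dsum P x"
  shows "reindex r s \<in> dsum Q x"
  using assms(2)
proof (induction rule: dsum_induct)
  case zero
  then show ?case by (simp add: vzero_in_dsum)
next
  case (add s ob w)
  then show ?case
    using assms(1)[OF add(3)]
    by (simp add: reindex_vadd dsum_iff[of s] dsum_vadd_vsingle)
qed

lemma reindex_lspan_trel:
  assumes "\<And>o1 o2 f. tobj P x o1 \<Longrightarrow> tobj P x o2 \<Longrightarrow> tmor o1 o2 f \<Longrightarrow>
      tobj Q x (r o1) \<and> tobj Q x (r o2) \<and> tmor (r o1) (r o2) f \<and> fst (r o1) = fst o1"
    and "d \<in> lspan (trel P x)"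
  shows "reindex r d \<in> lspan (trel Q x)"
  using assms(2)
proof (induction rule: lspan.induct)
  case zero
  then show ?case by (simp add: lspan.zero)
next
  case (step g s c)
  obtain o1 o2 f v where g: "g = vdiff (vsingle o1 v) (vsingle o2 (push_vec (fst o1) f v))"
    and h: "tobj P x o1" "tobj P x o2" "tmor o1 o2 f" "v \<in> Eucl (fst o1)"
    using step(1) unfolding trel_def by blast
  have "reindex r g = vdiff (vsingle (r o1) v) (vsingle (r o2) (push_vec (fst (r o1)) f v))"
    using assms(1)[OF h(1-3)] by (simp add: g reindex_vdiff)
  then have "reindex r g \<in> trel Q x"
    using assms(1)[OF h(1-3)] h(4) unfolding trel_def by fastforce
  then show ?case
    using lspan.step[OF _ step.IH] finite_supp_trel[OF step(1)] finite_supp_lspan_trel[OF step(2)]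
    by (simp add: reindex_vadd reindex_vscale finite_supp_vscale)
qed

lemma tclass_eq_iff:
  "s \<in> dsum P x \<Longrightarrow> tclass P x s = tclass P x t \<longleftrightarrow> vdiff s t \<in> lspan (trel P x)"
  using tclass_eq tclass_self by (fastforce simp: tclass_def)

lemma dsum_mono:
  assumes "\<And>ob. tobj Q x ob \<Longrightarrow> tobj P x ob" "s \<in> dsum Q x"
  shows "s \<in> dsum P x"
  using assms dsum_memD[OF assms(2)] by (simp add: dsum_iff)

lemma trel_mono:
  assumes "\<And>ob. tobj Q x ob \<Longrightarrow> tobj P x ob"
  shows "trel Q x \<subseteq> trel P x"
  unfolding trel_def using assms by blast

lemma tmap_id_tclass:
  assumes sub: "\<And>ob. tobj Q x ob \<Longrightarrow> tobj P x ob" and s: "s \<in> dsum Q x"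
  shows "tmap P x (\<lambda>a. a) (tclass Q x s) = tclass P x s"
proof
  show "tmap P x (\<lambda>a. a) (tclass Q x s) \<subseteq> tclass P x s"
  proof
    fix t assume "t \<in> tmap P x (\<lambda>a. a) (tclass Q x s)"
    then obtain s' where t: "t \<in> dsum P x" "vdiff t s' \<in> lspan (trel P x)"
      and s': "vdiff s' s \<in> lspan (trel Q x)"
      unfolding tmap_def push_sum_id tclass_def by blast
    have "vdiff s' s \<in> lspan (trel P x)"
      using lspan_mono[OF s' trel_mono[OF sub]] .
    with t(2) have "vadd (vdiff t s') (vdiff s' s) \<in> lspan (trel P x)"
      by (rule lspan_add)
    then show "t \<in> tclass P x s"
      using t(1) by (simp add: tclass_def vadd_def vdiff_def)
  qed
next
  show "tclass P x s \<subseteq> tmap P x (\<lambda>a. a) (tclass Q x s)"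
    using tclass_self[OF s] unfolding tmap_def push_sum_id tclass_def by blast
qed

theorem bij_betw_tmap_id_retraction:
  assumes sub: "\<And>ob. tobj Q x ob \<Longrightarrow> tobj P x ob"
    and retract: "\<And>ob. tobj P x ob \<Longrightarrow> tobj Q x (r ob) \<and> tmor (r ob) ob id \<and> fst (r ob) = fst ob"
    and functorial: "\<And>o1 o2 f. tobj P x o1 \<Longrightarrow> tobj P x o2 \<Longrightarrow> tmor o1 o2 f \<Longrightarrow>
      tmor (r o1) (r o2) f"
  shows "bij_betw (tmap P x (\<lambda>a. a)) (tspace Q x) (tspace P x)"
proof -
  have retract_P: "tobj P x (r ob) \<and> tmor (r ob) ob id \<and> fst (r ob) = fst ob" if "tobj P x ob" for ob
    using retract[OF that] sub by blast
  have retract_Q: "tobj Q x (r ob) \<and> tmor (r ob) ob id \<and> fst (r ob) = fst ob" if "tobj Q x ob" for ob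
    using retract[OF sub[OF that]] by blast
  have reflect_relation: "vdiff s t \<in> lspan (trel Q x)"
    if s: "s \<in> dsum Q x" and t: "t \<in> dsum Q x" and st: "vdiff s t \<in> lspan (trel P x)" for s t
  proof -
    have "reindex r (vdiff s t) \<in> lspan (trel Q x)"
      by (rule reindex_lspan_trel[OF _ st]) (use retract functorial in blast)
    then have Rst: "vdiff (reindex r s) (reindex r t) \<in> lspan (trel Q x)"
      using s t by (simp add: reindex_vdiff dsum_iff)
    have Rs: "vdiff s (reindex r s) \<in> lspan (trel Q x)"
      using retract_Q s by (rule vdiff_reindex_in_lspan_trel)
    have Rt: "vdiff t (reindex r t) \<in> lspan (trel Q x)"
      using retract_Q t by (rule vdiff_reindex_in_lspan_trel)
    have "vadd (vdiff (vdiff s (reindex r s)) (vdiff t (reindex r t)))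
        (vdiff (reindex r s) (reindex r t)) \<in> lspan (trel Q x)"
      using lspan_diff[OF Rs Rt] Rst by (rule lspan_add)
    then show ?thesis by (simp add: vadd_def vdiff_def)
  qed
  have "inj_on (tmap P x (\<lambda>a. a)) (tspace Q x)"
  proof (rule inj_onI)
    fix C1 C2 assume "C1 \<in> tspace Q x" "C2 \<in> tspace Q x"
      and images: "tmap P x (\<lambda>a. a) C1 = tmap P x (\<lambda>a. a) C2"
    then obtain s t where s: "s \<in> dsum Q x" "C1 = tclass Q x s"
      and t: "t \<in> dsum Q x" "C2 = tclass Q x t"
      unfolding tspace_def by blast
    have "tclass P x s = tclass P x t"
      using images by (simp add: s t tmap_id_tclass[OF sub])
    then have "vdiff s t \<in> lspan (trel P x)"
      using tclass_eq_iff[OF dsum_mono[OF sub s(1)]] by simp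
    then have "vdiff s t \<in> lspan (trel Q x)"
      by (rule reflect_relation[OF s(1) t(1)])
    then show "C1 = C2"
      unfolding s(2) t(2) by (rule tclass_eq)
  qed
  moreover have "tmap P x (\<lambda>a. a) ` tspace Q x = tspace P x"
  proof
    show "tmap P x (\<lambda>a. a) ` tspace Q x \<subseteq> tspace P x"
      unfolding tspace_def using tmap_id_tclass[OF sub] dsum_mono[OF sub] by auto
  next
    show "tspace P x \<subseteq> tmap P x (\<lambda>a. a) ` tspace Q x"
    proof (unfold tspace_def, rule image_subsetI)
      fix s assume s: "s \<in> dsum P x"
      have Rs: "reindex r s \<in> dsum Q x"
        by (rule reindex_in_dsum[OF _ s]) (use retract in blast)
      have "tclass P x s = tclass P x (reindex r s)"
        using vdiff_reindex_in_lspan_trel[OF retract_P s] by (rule tclass_eq)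
      also have "\<dots> = tmap P x (\<lambda>a. a) (tclass Q x (reindex r s))"
        using tmap_id_tclass[OF sub Rs] by simp
      finally show "tclass P x s \<in> tmap P x (\<lambda>a. a) ` tclass Q x ` dsum Q x"
        using Rs by blast
    qed
  qed
  ultimately show ?thesis by (simp add: bij_betw_def)
qed

lemma plot_eopen:
  assumes "diffeology X P" "P n U p"
  shows "eopen n U"
proof -
  have "\<forall>n U p. P n U p \<longrightarrow> eopen n U \<and> p ` U \<subseteq> X"
    using assms(1) unfolding diffeology_def by (rule conjunct1)
  then show ?thesis using assms(2) by blast
qed

lemma plot_comp:
  assumes "diffeology X P" "P n U p" "smooth_map m V n U f"
  shows "P m V (p \<circ> f)"
proof -
  have "\<forall>n U p m V f. P n U p \<longrightarrow> smooth_map m V n U f \<longrightarrow> P m V (p \<circ> f)"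
    using assms(1) unfolding diffeology_def by (elim conjE)
  then show ?thesis using assms(2,3) by blast
qed

lemma locally_connected_Eucl: "locally connected (Eucl n)"
proof -
  have "locally_connected_space (top_of_set (Eucl n))"
    using locally_connected_Euclidean_space[of n]
    by (simp add: Euclidean_space_def euclidean_product_topology Eucl_def)
  then show ?thesis
    unfolding locally_connected locally_connected_space
    by (simp add: connectedin_subtopology) meson
qed

definition origin_component :: "'a set \<Rightarrow> (nat \<Rightarrow> real) set \<Rightarrow> ((nat \<Rightarrow> real) \<Rightarrow> 'a) \<Rightarrow> (nat \<Rightarrow> real) set"
  where "origin_component A U p = connected_component_set {u\<in>U. p u \<in> A} origin"

definition restrict_obj :: "'a set \<Rightarrow> 'a tobj \<Rightarrow> 'a tobj" where
  "restrict_obj A ob = (case ob of (n, U, p) \<Rightarrow> (n, origin_component A U p, p))"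

lemma origin_component_subset: "origin_component A U p \<subseteq> {u\<in>U. p u \<in> A}"
  unfolding origin_component_def by (rule connected_component_subset)

lemma connected_origin_component: "connected (origin_component A U p)"
  unfolding origin_component_def by (rule connected_connected_component)

lemma origin_in_origin_component: "origin \<in> U \<Longrightarrow> p origin \<in> A \<Longrightarrow> origin \<in> origin_component A U p"
  unfolding origin_component_def by (simp add: connected_component_refl)

lemma eopen_origin_component:
  assumes "diffeology X P" "D_open X P A" "P n U p"
  shows "eopen n (origin_component A U p)"
proof -
  have U: "eopen n U" using plot_eopen[OF assms(1,3)] .
  then have "openin (top_of_set (Eucl n)) {u\<in>U. p u \<in> A}"
    using assms(2,3) openin_trans unfolding D_open_def eopen_def by blast
  then have "openin (top_of_set (Eucl n)) (origin_component A U p)"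
  proof (cases "origin \<in> {u\<in>U. p u \<in> A}")
    case True
    with \<open>openin _ _\<close> show ?thesis
      unfolding origin_component_def
      by (intro locally_connected_Eucl[unfolded locally_connected_open_connected_component, rule_format] conjI)
  next
    case False
    then have "origin_component A U p = {}"
      unfolding origin_component_def connected_component_eq_empty .
    then show ?thesis by simp
  qed
  moreover have "origin_component A U p \<subseteq> Eucl n"
    using origin_component_subset U unfolding eopen_def by blast
  ultimately show ?thesis by (simp add: eopen_def)
qed

lemma tobj_subplotsD: "tobj (subplots P A) x ob \<Longrightarrow> tobj P x ob"
  by (cases ob) (simp add: tobj_def subplots_def)

lemma tobj_restrict_obj:
  assumes P: "diffeology X P" and A: "D_open X P A" "x \<in> A" and ob: "tobj P x ob"
  shows "tobj (subplots P A) x (restrict_obj A ob) \<and> tmor (restrict_obj A ob) ob id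
    \<and> fst (restrict_obj A ob) = fst ob"
proof -
  obtain n U p where ob_eq: "ob = (n, U, p)" by (cases ob)
  have p: "P n U p" "origin \<in> U" "p origin = x"
    using ob by (simp_all add: ob_eq tobj_def)
  let ?W = "origin_component A U p"
  have incl: "smooth_map n ?W n U id"
    using smooth_map_inclusion eopen_origin_component[OF P A(1) p(1)] plot_eopen[OF P p(1)]
      origin_component_subset by blast
  then have "P n ?W p"
    using plot_comp[OF P p(1)] by fastforce
  then show ?thesis
    using incl p A(2) origin_component_subset[of A U p] connected_origin_component[of A U p]
      origin_in_origin_component[of U p A]
    by (auto simp: ob_eq restrict_obj_def tobj_def tmor_def subplots_def)
qed

lemma tmor_restrict_obj:
  assumes P: "diffeology X P" and A: "D_open X P A" "x \<in> A"
    and o1: "tobj P x o1" and o2: "tobj P x o2" and f: "tmor o1 o2 f"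
  shows "tmor (restrict_obj A o1) (restrict_obj A o2) f"
proof -
  obtain n1 U1 p1 where o1_eq: "o1 = (n1, U1, p1)" by (cases o1)
  obtain n2 U2 p2 where o2_eq: "o2 = (n2, U2, p2)" by (cases o2)
  have p1: "P n1 U1 p1" "origin \<in> U1" "p1 origin = x"
    using o1 by (simp_all add: o1_eq tobj_def)
  have p2: "P n2 U2 p2"
    using o2 by (simp_all add: o2_eq tobj_def)
  have f: "smooth_map n1 U1 n2 U2 f" "f origin = origin" "\<forall>u\<in>U1. p2 (f u) = p1 u"
    using f by (simp_all add: o1_eq o2_eq tmor_def)
  let ?W1 = "origin_component A U1 p1" and ?W2 = "origin_component A U2 p2"
  have W1: "?W1 \<subseteq> {u\<in>U1. p1 u \<in> A}" "origin \<in> ?W1"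
    using origin_component_subset origin_in_origin_component p1 A(2) by auto
  have "origin \<in> f ` ?W1"
    using W1(2) f(2) by (metis image_eqI)
  moreover have "connected (f ` ?W1)"
    using connected_continuous_image continuous_on_subset[OF continuous_on_smooth_map[OF f(1)]]
      connected_origin_component W1(1) by blast
  moreover have "f ` ?W1 \<subseteq> {u\<in>U2. p2 u \<in> A}"
    using W1(1) f(1,3) unfolding smooth_map_def by auto
  ultimately have "f ` ?W1 \<subseteq> ?W2"
    unfolding origin_component_def by (rule connected_component_maximal)
  then have "smooth_map n1 ?W1 n2 ?W2 f"
    using smooth_map_subset[OF f(1)] W1(1) eopen_origin_component[OF P A(1)] p1(1) p2 by blast
  then show ?thesis
    using f(2,3) W1(1) by (auto simp: o1_eq o2_eq restrict_obj_def tmor_def)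
qed

theorem proposition3p6:
  fixes X :: "'a set" and P :: "'a plots" and A :: "'a set" and x :: 'a
  assumes "diffeology X P"
    and "D_open X P A"
    and "x \<in> A"
  shows "bij_betw (tmap P x (\<lambda>a. a)) (tspace (subplots P A) x) (tspace P x)"
proof (rule bij_betw_tmap_id_retraction[where r = "restrict_obj A"])
  show "tobj P x ob" if "tobj (subplots P A) x ob" for ob
    using that by (rule tobj_subplotsD)
  show "tobj (subplots P A) x (restrict_obj A ob) \<and> tmor (restrict_obj A ob) ob id
      \<and> fst (restrict_obj A ob) = fst ob" if "tobj P x ob" for ob
    using assms that by (rule tobj_restrict_obj)
  show "tmor (restrict_obj A o1) (restrict_obj A o2) f"
    if "tobj P x o1" "tobj P x o2" "tmor o1 o2 f" for o1 o2 f
    using assms that by (rule tmor_restrict_obj)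
qed

end
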